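(* Let $h=0$, $\rho>0$ and $\varepsilon,\varepsilon'\in(-\frac{\rho J}2,0]$. If $\varepsilon\ne0$, \[ w_2(\mu_{\mathrm{MC}}^{\varepsilon,\rho;N},\mu_{\mathrm{MC}}^{\varepsilon',\rho;N};N)\le\frac2J\frac{1}{\sqrt{-\frac{2\varepsilon}J}\sqrt{1-\left(-\frac{2\varepsilon}{J\rho}\right)}}|\varepsilon-\varepsilon'|, \] and for $\varepsilon=0$, \[ w_2(\mu_{\mathrm{MC}}^{0,\rho;N},\mu_{\mathrm{MC}}^{\varepsilon',\rho;N};N)\le\frac2{\sqrt J}|\varepsilon'|^{1/2}. \]
   Context: Mean-field spherical model with $h=0$: $\phi\in\mathbb{R}^N$ ($N$ lattice sites), $J>0$, $H[\phi]=-\frac J{2N}(\sum_x\phi_x)^2$. For $\rho>0$, $|m|<\sqrt\rho$, $\mu_{\mathrm{MC}}^{m,\rho;N}$ is the normalized uniform surface measure on $\{\sum_x\phi_x=mN,\ \sum_x\phi_x^2=\rho N\}$. For $\varepsilon\in(-\frac{\rho J}2,0)$ the microcanonical ensemble is $\mu_{\mathrm{MC}}^{\varepsilon,\rho;N}=\frac12\mu_{\mathrm{MC}}^{m_+,\rho;N}+\frac12\mu_{\mathrm{MC}}^{m_-,\rho;N}$ with $m_\pm=\pm\sqrt{-2\varepsilon/J}$, and $\mu_{\mathrm{MC}}^{0,\rho;N}=\mu_{\mathrm{MC}}^{m,\rho;N}|_{m=0}$. $w_2(\mu_1,\mu_2;N)=\left(\inf_\gamma\int\gamma(dx,dy)\frac1N\sum_i|x_i-y_i|^2\right)^{1/2}$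 over couplings of $\mu_1,\mu_2$. *)

theory Defs
  imports "HOL-Probability.Probability"
begin

text \<open>Configurations \<phi> in R^N are vectors of type real^'n, N = CARD('n).
  The borel sigma-algebra on real^'n is the one of the Euclidean topology.\<close>

definition onevec :: "real ^ 'n" where
  "onevec = (\<chi> i. 1)"

definition mc_surface :: "real \<Rightarrow> real \<Rightarrow> (real ^ 'n) set" where
  "mc_surface m \<rho> = {\<phi>. (\<Sum>i\<in>UNIV. \<phi> $ i) = m * real CARD('n)
                        \<and> (\<Sum>i\<in>UNIV. (\<phi> $ i)^2) = \<rho> * real CARD('n)}"

text \<open>The normalized uniform surface measure on the surface: it is the (N-2)-sphere
  centred at m*1 inside the hyperplane orthogonal to 1, and its normalized uniform
  measure is the probability measure carried by the surface that is invariant under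
  all orthogonal transformations fixing the vector 1 (the symmetry group of this sphere).\<close>
definition mc_fixed :: "real \<Rightarrow> real \<Rightarrow> (real ^ 'n) measure" where
  "mc_fixed m \<rho> = (THE \<mu>. prob_space \<mu> \<and> sets \<mu> = sets borel
       \<and> emeasure \<mu> (mc_surface m \<rho>) = 1
       \<and> (\<forall>Q. orthogonal_transformation Q \<and> Q onevec = onevec \<longrightarrow> distr \<mu> borel Q = \<mu>))"

definition half_mix :: "'a measure \<Rightarrow> 'a measure \<Rightarrow> 'a measure" where
  "half_mix \<mu> \<nu> = measure_of (space \<mu>) (sets \<mu>)
      (\<lambda>A. (1/2) * emeasure \<mu> A + (1/2) * emeasure \<nu> A)"

definition mc_energy :: "real \<Rightarrow> real \<Rightarrow> real \<Rightarrow> (real ^ 'n) measure" where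
  "mc_energy J \<epsilon> \<rho> = (if \<epsilon> = 0 then mc_fixed 0 \<rho>
      else half_mix (mc_fixed (sqrt (-2*\<epsilon>/J)) \<rho>) (mc_fixed (- sqrt (-2*\<epsilon>/J)) \<rho>))"

definition couplings :: "(real ^ 'n) measure \<Rightarrow> (real ^ 'n) measure \<Rightarrow> ((real ^ 'n) \<times> (real ^ 'n)) measure set" where
  "couplings \<mu> \<nu> = {\<gamma>. prob_space \<gamma> \<and> sets \<gamma> = sets borel
       \<and> distr \<gamma> borel fst = \<mu> \<and> distr \<gamma> borel snd = \<nu>}"

definition w2 :: "(real ^ 'n) measure \<Rightarrow> (real ^ 'n) measure \<Rightarrow> real" where
  "w2 \<mu> \<nu> = sqrt (enn2real (INF \<gamma>\<in>couplings \<mu> \<nu>.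
       \<integral>\<^sup>+ p. ennreal ((1 / real CARD('n)) * (\<Sum>i\<in>UNIV. \<bar>fst p $ i - snd p $ i\<bar>^2)) \<partial>\<gamma>))"

end

(* For m\<^sup>2 < \<rho> the surface mc_surface m \<rho> is a round sphere in the hyperplane orthogonal to
   onevec, and mc_fixed m \<rho> is its unique probability measure invariant under the orthogonal maps
   fixing onevec. Uniqueness: such a measure has a moment generating function that depends only on
   the length of the centred argument, so a Fubini argument equates the moment generating functions
   of two such measures, and these determine measures on compact sets by Stone-Weierstrass.
   Existence: project the uniform measure of a shell radially onto the sphere.
   The affine map surface_rescale carrying the sphere of magnetization m onto that of m' commutes
   with the symmetries, hence pushes mc_fixed m \<rho> to mc_fixed m' \<rho>, and it moves every point by
   the same normalized distance rescale_distance \<rho> m m'. Coupling the halves \<plusminus>m of one ensemble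
   with the halves \<plusminus>m' of the other in this way bounds w2 by that distance, and elementary estimates
   with m\<^sup>2 = -2\<epsilon>/J turn it into the stated bounds. *)

theory Submission
  imports Defs "HOL-Analysis.Change_Of_Vars"
begin

section \<open>Geometry of the constraint surface\<close>

lemma inner_onevec: "x \<bullet> (onevec :: real^'n) = (\<Sum>i\<in>UNIV. x $ i)"
  by (simp add: onevec_def inner_vec_def)

lemma inner_onevec_onevec: "onevec \<bullet> (onevec :: real^'n) = real CARD('n)"
  by (simp add: onevec_def inner_vec_def)

lemma sum_power2_eq_inner: "(\<Sum>i\<in>UNIV. (x $ i)\<^sup>2) = x \<bullet> (x :: real^'n)"
  by (simp add: inner_vec_def power2_eq_square)

lemma mc_surface_inner:
  "mc_surface m \<rho> = {x :: real^'n. x \<bullet> onevec = m * real CARD('n) \<and> x \<bullet> x = \<rho> * real CARD('n)}"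
  by (simp add: mc_surface_def inner_onevec sum_power2_eq_inner)

lemma inner_shift_onevec_self:
  assumes "v \<bullet> onevec = 0"
  shows "(a *\<^sub>R onevec + v) \<bullet> (a *\<^sub>R onevec + v :: real^'n) = a\<^sup>2 * real CARD('n) + v \<bullet> v"
  using assms by (simp add: inner_add_left inner_add_right inner_commute inner_onevec_onevec power2_eq_square)

lemma mc_surface_iff_shift:
  fixes x :: "real^'n"
  shows "x \<in> mc_surface m \<rho> \<longleftrightarrow>
     (x - m *\<^sub>R onevec) \<bullet> onevec = 0 \<and>
     (x - m *\<^sub>R onevec) \<bullet> (x - m *\<^sub>R onevec) = (\<rho> - m\<^sup>2) * real CARD('n)"
    (is "_ \<longleftrightarrow> ?perp \<and> ?radius")
proof -
  have "x \<in> mc_surface m \<rho> \<longleftrightarrow> ?perp \<and> x \<bullet> x = \<rho> * real CARD('n)"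
    by (auto simp: mc_surface_inner inner_diff_left inner_onevec_onevec)
  also have "\<dots> \<longleftrightarrow> ?perp \<and> ?radius"
    using inner_shift_onevec_self[of "x - m *\<^sub>R onevec" m] by (auto simp: algebra_simps)
  finally show ?thesis .
qed

lemma closed_mc_surface: "closed (mc_surface m \<rho> :: (real^'n) set)"
  unfolding mc_surface_inner by (intro closed_Collect_conj closed_Collect_eq continuous_intros)

lemma mc_surface_borel [measurable]: "mc_surface m \<rho> \<in> sets (borel :: (real^'n) measure)"
  by (simp add: borel_closed closed_mc_surface)

lemma compact_mc_surface: "compact (mc_surface m \<rho> :: (real^'n) set)"
proof -
  have "norm x \<le> sqrt (\<rho> * real CARD('n))" if "x \<in> mc_surface m \<rho>" for x :: "real^'n"
    using that by (simp add: mc_surface_inner norm_eq_sqrt_inner)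
  then have "bounded (mc_surface m \<rho> :: (real^'n) set)"
    unfolding bounded_iff by blast
  then show ?thesis
    by (simp add: compact_eq_bounded_closed closed_mc_surface)
qed

definition surface_rescale :: "real \<Rightarrow> real \<Rightarrow> real \<Rightarrow> real^'n \<Rightarrow> real^'n" where
  "surface_rescale \<rho> m m' x =
     m' *\<^sub>R onevec + sqrt ((\<rho> - m'\<^sup>2) / (\<rho> - m\<^sup>2)) *\<^sub>R (x - m *\<^sub>R onevec)"

text \<open>The normalized distance \<open>sqrt ((x - y) \<bullet> (x - y) / N)\<close> between \<open>x\<close> and
  \<open>y = surface_rescale \<rho> m m' x\<close>, the same for every \<open>x\<close> on the surface.\<close>

definition rescale_distance :: "real \<Rightarrow> real \<Rightarrow> real \<Rightarrow> real" where
  "rescale_distance \<rho> m m' = sqrt ((m - m')\<^sup>2 + (sqrt (\<rho> - m\<^sup>2) - sqrt (\<rho> - m'\<^sup>2))\<^sup>2)"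

lemma power2_rescale_distance:
  "(rescale_distance \<rho> m m')\<^sup>2 = (m - m')\<^sup>2 + (sqrt (\<rho> - m\<^sup>2) - sqrt (\<rho> - m'\<^sup>2))\<^sup>2"
  by (simp add: rescale_distance_def)

lemma rescale_distance_uminus: "rescale_distance \<rho> (- m) (- m') = rescale_distance \<rho> m m'"
  by (simp add: rescale_distance_def power2_commute)

lemma borel_measurable_surface_rescale [measurable]:
  "surface_rescale \<rho> m m' \<in> borel_measurable borel"
  unfolding surface_rescale_def by measurable

lemma surface_rescale_mem:
  assumes "m\<^sup>2 < \<rho>" "m'\<^sup>2 < \<rho>" "x \<in> mc_surface m \<rho>"
  shows "surface_rescale \<rho> m m' x \<in> mc_surface m' \<rho>"
proof -
  define k where "k = sqrt ((\<rho> - m'\<^sup>2) / (\<rho> - m\<^sup>2))"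
  have "k * k * (\<rho> - m\<^sup>2) = \<rho> - m'\<^sup>2"
    using assms(1,2) by (simp add: k_def)
  moreover have "surface_rescale \<rho> m m' x - m' *\<^sub>R onevec = k *\<^sub>R (x - m *\<^sub>R onevec)"
    by (simp add: surface_rescale_def k_def)
  ultimately show ?thesis
    using assms(3) unfolding mc_surface_iff_shift[of "surface_rescale \<rho> m m' x"]
    by (simp add: mc_surface_iff_shift)
qed

lemma surface_rescale_inverse:
  assumes "m\<^sup>2 < \<rho>" "m'\<^sup>2 < \<rho>"
  shows "surface_rescale \<rho> m' m (surface_rescale \<rho> m m' x) = x"
proof -
  have "sqrt ((\<rho> - m\<^sup>2) / (\<rho> - m'\<^sup>2)) * sqrt ((\<rho> - m'\<^sup>2) / (\<rho> - m\<^sup>2)) = 1"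
    using assms by (simp flip: real_sqrt_mult)
  then show ?thesis
    by (simp add: surface_rescale_def algebra_simps)
qed

lemma surface_rescale_commute:
  assumes "linear Q" "Q onevec = onevec"
  shows "Q (surface_rescale \<rho> m m' x) = surface_rescale \<rho> m m' (Q x)"
  using assms by (simp add: surface_rescale_def linear_add linear_scale linear_diff)

lemma surface_rescale_dist:
  fixes x :: "real^'n"
  assumes "m\<^sup>2 < \<rho>" "m'\<^sup>2 < \<rho>" "x \<in> mc_surface m \<rho>"
  shows "(x - surface_rescale \<rho> m m' x) \<bullet> (x - surface_rescale \<rho> m m' x) =
           (rescale_distance \<rho> m m')\<^sup>2 * real CARD('n)"
proof -
  define v where "v = x - m *\<^sub>R onevec"
  define k where "k = sqrt ((\<rho> - m'\<^sup>2) / (\<rho> - m\<^sup>2))"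
  have v: "v \<bullet> onevec = 0" "v \<bullet> v = (\<rho> - m\<^sup>2) * real CARD('n)"
    using assms(3) by (simp_all add: mc_surface_iff_shift v_def)
  have "k * sqrt (\<rho> - m\<^sup>2) = sqrt (\<rho> - m'\<^sup>2)"
    using assms(1) by (simp add: k_def flip: real_sqrt_mult)
  then have "(1 - k) * sqrt (\<rho> - m\<^sup>2) = sqrt (\<rho> - m\<^sup>2) - sqrt (\<rho> - m'\<^sup>2)"
    by (simp add: algebra_simps)
  then have "(1 - k)\<^sup>2 * (\<rho> - m\<^sup>2) = (sqrt (\<rho> - m\<^sup>2) - sqrt (\<rho> - m'\<^sup>2))\<^sup>2"
    using assms(1) by (metis less_eq_real_def diff_gt_0_iff_gt power_mult_distrib real_sqrt_pow2)
  then have "(1 - k)\<^sup>2 * (v \<bullet> v) = (sqrt (\<rho> - m\<^sup>2) - sqrt (\<rho> - m'\<^sup>2))\<^sup>2 * real CARD('n)"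
    by (simp add: v(2))
  moreover have "x - surface_rescale \<rho> m m' x = (m - m') *\<^sub>R onevec + (1 - k) *\<^sub>R v"
    by (simp add: surface_rescale_def v_def k_def algebra_simps)
  moreover have "((1 - k) *\<^sub>R v) \<bullet> onevec = 0"
    using v(1) by simp
  ultimately show ?thesis
    unfolding power2_rescale_distance by (simp add: inner_shift_onevec_self power2_eq_square distrib_right)
qed

lemma borel_measurable_linear:
  fixes f :: "'a::euclidean_space \<Rightarrow> 'b::real_normed_vector"
  assumes "linear f"
  shows "f \<in> borel_measurable borel"
  using assms by (intro borel_measurable_continuous_onI linear_continuous_on)
    (simp add: linear_conv_bounded_linear)

lemma borel_measurable_orthogonal_transformation:
  fixes Q :: "'a::euclidean_space \<Rightarrow> 'a"
  shows "orthogonal_transformation Q \<Longrightarrow> Q \<in> borel_measurable borel"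
  by (simp add: borel_measurable_linear orthogonal_transformation_linear)

text \<open>The reflection in the hyperplane orthogonal to \<open>w - w'\<close> exchanges \<open>w\<close> and \<open>w'\<close> and
  fixes \<open>a\<close>.\<close>

lemma orthogonal_transformation_fixing_exists:
  fixes a w w' :: "'a::real_inner"
  assumes "w \<bullet> a = 0" "w' \<bullet> a = 0" "norm w = norm w'"
  obtains Q where "orthogonal_transformation Q" "Q a = a" "Q w = w'"
proof (cases "w = w'")
  case True
  then show ?thesis
    using that[of "\<lambda>x. x"] by simp
next
  case False
  define u where "u = w - w'"
  define Q where "Q x = x - (2 * (x \<bullet> u) / (u \<bullet> u)) *\<^sub>R u" for x
  have uu: "u \<bullet> u \<noteq> 0"
    using False by (simp add: u_def)
  have "linear Q"
    unfolding Q_def by (intro linearI) (auto simp: inner_add_left algebra_simps add_divide_distrib)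
  moreover have "Q x \<bullet> Q y = x \<bullet> y" for x y
    using uu by (simp add: Q_def inner_diff_left inner_diff_right inner_commute field_simps power2_eq_square)
  ultimately have "orthogonal_transformation Q"
    by (simp add: orthogonal_transformation_def)
  moreover have "Q a = a"
    using assms(1,2) by (simp add: Q_def u_def inner_diff_right inner_commute)
  moreover have "w \<bullet> w = w' \<bullet> w'"
    using assms(3) by (metis power2_norm_eq_inner)
  then have "2 * (w \<bullet> u) = u \<bullet> u"
    by (simp add: u_def inner_diff_left inner_diff_right inner_commute)
  then have "Q w = w'"
    using uu by (simp add: Q_def u_def)
  ultimately show ?thesis
    using that by blast
qed

section \<open>Invariant probability measures on the surface\<close>

definition is_mc_fixed :: "real \<Rightarrow> real \<Rightarrow> (real^'n) measure \<Rightarrow> bool" where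
  "is_mc_fixed m \<rho> \<mu> \<longleftrightarrow> prob_space \<mu> \<and> sets \<mu> = sets borel
     \<and> emeasure \<mu> (mc_surface m \<rho>) = 1
     \<and> (\<forall>Q. orthogonal_transformation Q \<and> Q onevec = onevec \<longrightarrow> distr \<mu> borel Q = \<mu>)"

lemma mc_fixed_eq_The: "mc_fixed m \<rho> = (THE \<mu>. is_mc_fixed m \<rho> \<mu>)"
  by (simp add: mc_fixed_def is_mc_fixed_def)

lemma is_mc_fixedD:
  assumes "is_mc_fixed m \<rho> \<mu>"
  shows "prob_space \<mu>" and "sets \<mu> = sets borel" and "space \<mu> = UNIV"
    and "AE x in \<mu>. x \<in> mc_surface m \<rho>"
    and "\<And>Q. orthogonal_transformation Q \<Longrightarrow> Q onevec = onevec \<Longrightarrow> distr \<mu> borel Q = \<mu>"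
proof -
  show P: "prob_space \<mu>" and S: "sets \<mu> = sets borel"
    using assms by (simp_all add: is_mc_fixed_def)
  then show "space \<mu> = UNIV"
    using sets_eq_imp_space_eq by fastforce
  have "Measurable.pred \<mu> (\<lambda>x. x \<in> mc_surface m \<rho>)"
    unfolding measurable_cong_sets[OF S refl] by measurable
  then show "AE x in \<mu>. x \<in> mc_surface m \<rho>"
    using assms by (simp add: prob_space.AE_iff_emeasure_eq_1[OF P] is_mc_fixed_def \<open>space \<mu> = UNIV\<close>)
  show "\<And>Q. orthogonal_transformation Q \<Longrightarrow> Q onevec = onevec \<Longrightarrow> distr \<mu> borel Q = \<mu>"
    using assms by (simp add: is_mc_fixed_def)
qed

lemma is_mc_fixed_distrI:
  fixes \<mu> :: "(real^'m) measure" and L :: "real^'m \<Rightarrow> real^'n"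
  assumes "prob_space \<mu>" and S: "sets \<mu> = sets borel"
    and [measurable]: "L \<in> borel_measurable borel"
    and surface: "AE x in \<mu>. L x \<in> mc_surface m \<rho>"
    and intertwine: "\<And>Q. orthogonal_transformation Q \<Longrightarrow> Q onevec = onevec \<Longrightarrow>
       \<exists>Q'. Q' \<in> borel_measurable borel \<and> distr \<mu> borel Q' = \<mu> \<and> (\<forall>x. Q (L x) = L (Q' x))"
  shows "is_mc_fixed m \<rho> (distr \<mu> borel L)"
proof -
  interpret prob_space \<mu> by fact
  have L: "L \<in> \<mu> \<rightarrow>\<^sub>M borel"
    using assms(3) by (simp add: measurable_cong_sets[OF S refl])
  have "AE x in distr \<mu> borel L. x \<in> mc_surface m \<rho>"
    using surface by (subst AE_distr_iff) (simp_all add: L)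
  then have "emeasure (distr \<mu> borel L) (mc_surface m \<rho>) = 1"
    by (intro prob_space.emeasure_eq_1_AE prob_space_distr L) simp_all
  moreover have "distr (distr \<mu> borel L) borel Q = distr \<mu> borel L"
    if Q: "orthogonal_transformation Q" "Q onevec = onevec" for Q
  proof -
    obtain Q' where [measurable]: "Q' \<in> borel_measurable borel"
      and Q': "distr \<mu> borel Q' = \<mu>" and comm: "\<And>x. Q (L x) = L (Q' x)"
      using intertwine[OF Q] by blast
    note [measurable] = borel_measurable_orthogonal_transformation[OF Q(1)]
    have "distr (distr \<mu> borel L) borel Q = distr \<mu> borel (\<lambda>x. L (Q' x))"
      using L by (simp add: distr_distr comp_def comm)
    also have "\<dots> = distr (distr \<mu> borel Q') borel L"
      by (simp add: distr_distr comp_def measurable_cong_sets[OF S refl])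
    finally show ?thesis
      using Q' by simp
  qed
  ultimately show ?thesis
    using L S by (simp add: is_mc_fixed_def prob_space_distr)
qed

lemma is_mc_fixed_rescale:
  assumes "is_mc_fixed m \<rho> \<mu>" "m\<^sup>2 < \<rho>" "m'\<^sup>2 < \<rho>"
  shows "is_mc_fixed m' \<rho> (distr \<mu> borel (surface_rescale \<rho> m m'))"
proof (rule is_mc_fixed_distrI[OF is_mc_fixedD(1,2)[OF assms(1)] borel_measurable_surface_rescale])
  show "AE x in \<mu>. surface_rescale \<rho> m m' x \<in> mc_surface m' \<rho>"
    using is_mc_fixedD(4)[OF assms(1)] by eventually_elim (rule surface_rescale_mem[OF assms(2,3)])
  show "\<exists>Q'. Q' \<in> borel_measurable borel \<and> distr \<mu> borel Q' = \<mu> \<and>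
          (\<forall>x. Q (surface_rescale \<rho> m m' x) = surface_rescale \<rho> m m' (Q' x))"
    if "orthogonal_transformation Q" "Q onevec = onevec" for Q
    using that is_mc_fixedD(5)[OF assms(1) that] borel_measurable_orthogonal_transformation[OF that(1)]
      surface_rescale_commute[OF orthogonal_transformation_linear] by blast
qed

lemma inner_reindex:
  fixes g :: "'n::finite \<Rightarrow> 'm::finite" and x y :: "real^'m"
  assumes "bij g"
  shows "(\<chi> i. x $ g i) \<bullet> (\<chi> i. y $ g i) = x \<bullet> y"
  using sum.reindex_bij_betw[of g UNIV UNIV "\<lambda>j. x $ j * y $ j"] assms
  by (simp add: inner_vec_def bij_betw_def bij_def)

lemma is_mc_fixed_reindex:
  fixes g :: "'n::finite \<Rightarrow> 'm::finite" and \<mu> :: "(real^'m) measure"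
  assumes g: "bij g" and \<mu>: "is_mc_fixed m \<rho> \<mu>"
  shows "is_mc_fixed m \<rho> (distr \<mu> borel (\<lambda>x. \<chi> i. x $ g i) :: (real^'n) measure)"
proof -
  define L :: "real^'m \<Rightarrow> real^'n" where "L x = (\<chi> i. x $ g i)" for x
  define L' :: "real^'n \<Rightarrow> real^'m" where "L' y = (\<chi> j. y $ inv g j)" for y
  have LL': "L (L' y) = y" for y
    using g by (simp add: L_def L'_def vec_eq_iff bij_is_inj)
  have "linear L" "linear L'"
    unfolding L_def L'_def by (auto intro!: linearI simp: vec_eq_iff)
  have inner_L: "L x \<bullet> L y = x \<bullet> y" and inner_L': "L' u \<bullet> L' v = u \<bullet> v" for x y u v
    by (simp_all add: L_def L'_def inner_reindex g bij_imp_bij_inv)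
  have L1: "L onevec = onevec" and L'1: "L' onevec = onevec"
    by (simp_all add: L_def L'_def onevec_def vec_eq_iff)
  have card: "CARD('n) = CARD('m)"
    using g bij_betw_same_card[of g UNIV UNIV] by (simp add: bij_betw_def bij_def)
  have "is_mc_fixed m \<rho> (distr \<mu> borel L)"
  proof (rule is_mc_fixed_distrI[OF is_mc_fixedD(1,2)[OF \<mu>] borel_measurable_linear[OF \<open>linear L\<close>]])
    have surface: "L x \<in> mc_surface m \<rho>" if "x \<in> mc_surface m \<rho>" for x
      using that inner_L[of x onevec] inner_L[of x x] by (simp add: mc_surface_inner L1 card)
    show "AE x in \<mu>. L x \<in> mc_surface m \<rho>"
      using is_mc_fixedD(4)[OF \<mu>] by eventually_elim (rule surface)
    show "\<exists>Q'. Q' \<in> borel_measurable borel \<and> distr \<mu> borel Q' = \<mu> \<and> (\<forall>x. Q (L x) = L (Q' x))"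
      if Q: "orthogonal_transformation Q" "Q onevec = onevec" for Q
    proof (intro exI conjI allI)
      have "orthogonal_transformation (\<lambda>x. L' (Q (L x)))"
        using Q(1) \<open>linear L\<close> \<open>linear L'\<close>
        by (auto simp: orthogonal_transformation_def inner_L inner_L' intro: linear_compose[unfolded comp_def])
      moreover have "L' (Q (L onevec)) = onevec"
        by (simp add: L1 Q(2) L'1)
      ultimately show "(\<lambda>x. L' (Q (L x))) \<in> borel_measurable borel" "distr \<mu> borel (\<lambda>x. L' (Q (L x))) = \<mu>"
        by (simp_all add: borel_measurable_orthogonal_transformation is_mc_fixedD(5)[OF \<mu>])
      show "Q (L x) = L (L' (Q (L x)))" for x
        by (simp add: LL')
    qed
  qed
  then show ?thesis
    by (simp add: L_def[abs_def])
qed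

section \<open>Measures determined by integrals\<close>

lemma integrable_continuous_AE_compact:
  fixes f :: "'a::topological_space \<Rightarrow> real"
  assumes "finite_measure \<mu>" "sets \<mu> = sets borel" "compact S" "AE x in \<mu>. x \<in> S"
    and "continuous_on UNIV f"
  shows "integrable \<mu> f"
proof -
  have "compact (f ` S)"
    using assms(3,5) by (metis compact_continuous_image continuous_on_subset subset_UNIV)
  then obtain B where B: "\<forall>x\<in>S. norm (f x) \<le> B"
    by (auto simp: bounded_iff dest!: compact_imp_bounded)
  have "AE x in \<mu>. norm (f x) \<le> B"
    using assms(4) by eventually_elim (use B in auto)
  moreover have "f \<in> borel_measurable \<mu>"
    using borel_measurable_continuous_onI[OF assms(5)] by (simp add: measurable_cong_sets[OF assms(2) refl])
  ultimately show ?thesis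
    using finite_measure.integrable_const_bound[OF assms(1)] by blast
qed

lemma (in prob_space) integral_dist_le_AE:
  fixes f g :: "'a \<Rightarrow> real"
  assumes "integrable M f" "integrable M g" "AE x in M. \<bar>f x - g x\<bar> \<le> e"
  shows "\<bar>(\<integral>x. f x \<partial>M) - (\<integral>x. g x \<partial>M)\<bar> \<le> e"
proof -
  have "AE x in M. f x - g x \<le> e" "AE x in M. g x - f x \<le> e"
    using assms(3) by (eventually_elim, simp)+
  then have "(\<integral>x. f x - g x \<partial>M) \<le> e" "(\<integral>x. g x - f x \<partial>M) \<le> e"
    using assms(1,2) by (auto intro: integral_le_const simp del: Bochner_Integration.integral_diff)
  then show ?thesis
    using assms(1,2) by (simp add: Bochner_Integration.integral_diff)
qed

lemma tendsto_infdist_cutoff: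
  assumes "closed C" "C \<noteq> {}"
  shows "(\<lambda>n. max 0 (1 - real n * infdist x C)) \<longlonglongrightarrow> indicator C x"
proof (cases "x \<in> C")
  case True
  then show ?thesis
    by simp
next
  case False
  then have d: "infdist x C > 0"
    using assms in_closed_iff_infdist_zero infdist_nonneg[of x C] by fastforce
  have "max 0 (1 - real n * infdist x C) = 0" if "n \<ge> nat \<lceil>1 / infdist x C\<rceil>" for n
  proof -
    have "1 \<le> real n * infdist x C"
      using that d by (simp add: field_simps)
    then show ?thesis
      by simp
  qed
  then have "eventually (\<lambda>n. max 0 (1 - real n * infdist x C) = 0) sequentially"
    by (rule eventually_sequentiallyI)
  then show ?thesis
    using False by (simp add: tendsto_eventually)
qed

lemma finite_measure_closed_approx:
  fixes \<mu> :: "'a::metric_space measure"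
  assumes "finite_measure \<mu>" "sets \<mu> = sets borel" "closed C" "C \<noteq> {}"
  shows "(\<lambda>n. \<integral>x. max 0 (1 - real n * infdist x C) \<partial>\<mu>) \<longlonglongrightarrow> measure \<mu> C"
proof -
  interpret finite_measure \<mu> by fact
  have "(\<lambda>x. max 0 (1 - real n * infdist x C)) \<in> borel_measurable borel" for n
    by (intro borel_measurable_continuous_onI continuous_intros continuous_on_infdist)
  then have [measurable]: "(\<lambda>x. max 0 (1 - real n * infdist x C)) \<in> borel_measurable \<mu>" for n
    by (simp add: measurable_cong_sets[OF assms(2) refl])
  have [measurable]: "C \<in> sets \<mu>"
    using assms(2,3) by (simp add: borel_closed)
  have "norm (max 0 (1 - real n * infdist x C)) \<le> 1" for n x
    using infdist_nonneg[of x C] by simp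
  then have "(\<lambda>n. \<integral>x. max 0 (1 - real n * infdist x C) \<partial>\<mu>) \<longlonglongrightarrow> (\<integral>x. indicator C x \<partial>\<mu>)"
    using tendsto_infdist_cutoff[OF assms(3,4)]
    by (intro integral_dominated_convergence[where w="\<lambda>_. 1"]) auto
  then show ?thesis
    by simp
qed

lemma measure_eqI_integral_continuous:
  fixes \<mu> \<nu> :: "'a::metric_space measure"
  assumes "finite_measure \<mu>" "finite_measure \<nu>" "sets \<mu> = sets borel" "sets \<nu> = sets borel"
    and "\<And>f :: 'a \<Rightarrow> real. continuous_on UNIV f \<Longrightarrow> (\<integral>x. f x \<partial>\<mu>) = (\<integral>x. f x \<partial>\<nu>)"
  shows "\<mu> = \<nu>"
proof (rule measure_eqI_generator_eq[where E="Collect closed" and \<Omega>=UNIV and A="\<lambda>_. UNIV"])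
  have borel: "sets (borel :: 'a measure) = sigma_sets UNIV (Collect closed)"
    by (simp add: borel_eq_closed sets_measure_of)
  then show "sets \<mu> = sigma_sets UNIV (Collect closed)" "sets \<nu> = sigma_sets UNIV (Collect closed)"
    using assms(3,4) by simp_all
  show "Int_stable (Collect closed :: 'a set set)"
    by (auto simp: Int_stable_def)
  show "emeasure \<mu> C = emeasure \<nu> C" if "C \<in> Collect closed" for C
  proof (cases "C = {}")
    case False
    have C: "closed C"
      using that by simp
    have "(\<lambda>n. \<integral>x. max 0 (1 - real n * infdist x C) \<partial>\<mu>) = (\<lambda>n. \<integral>x. max 0 (1 - real n * infdist x C) \<partial>\<nu>)"
      by (intro ext assms(5)[where f="\<lambda>x. max 0 (1 - real _ * infdist x C)"] continuous_intros
          continuous_on_infdist continuous_on_id)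
    then have "measure \<mu> C = measure \<nu> C"
      using finite_measure_closed_approx[OF assms(1,3) C False] finite_measure_closed_approx[OF assms(2,4) C False]
      by (simp add: LIMSEQ_unique)
    then show ?thesis
      using assms(1,2) by (simp add: finite_measure.emeasure_eq_measure)
  qed simp
  show "emeasure \<mu> (UNIV :: 'a set) \<noteq> \<infinity>"
    using finite_measure.emeasure_finite[OF assms(1)] by simp
qed auto

lemma measure_eqI_function_ring:
  fixes \<mu> \<nu> :: "'a::metric_space measure"
  assumes R: "function_ring_on R S" "\<And>f. f \<in> R \<Longrightarrow> continuous_on UNIV f"
    and \<mu>: "prob_space \<mu>" "sets \<mu> = sets borel" "AE x in \<mu>. x \<in> S"
    and \<nu>: "prob_space \<nu>" "sets \<nu> = sets borel" "AE x in \<nu>. x \<in> S"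
    and eq: "\<And>f. f \<in> R \<Longrightarrow> (\<integral>x. f x \<partial>\<mu>) = (\<integral>x. f x \<partial>\<nu>)"
  shows "\<mu> = \<nu>"
proof (rule measure_eqI_integral_continuous)
  interpret function_ring_on R S by fact
  show "finite_measure \<mu>" "finite_measure \<nu>"
    using \<mu>(1) \<nu>(1) by (simp_all add: prob_space_def)
  note integrable = integrable_continuous_AE_compact[OF _ _ compact]
  fix g :: "'a \<Rightarrow> real"
  assume g: "continuous_on UNIV g"
  have "\<bar>(\<integral>x. g x \<partial>\<mu>) - (\<integral>x. g x \<partial>\<nu>)\<bar> \<le> 0 + e" if "e > 0" for e
  proof -
    obtain f where f: "f \<in> R" "\<forall>x\<in>S. \<bar>g x - f x\<bar> < e / 2"
      using Stone_Weierstrass_basic[OF continuous_on_subset[OF g] half_gt_zero[OF \<open>e > 0\<close>]] by auto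
    have close: "\<bar>(\<integral>x. g x \<partial>M) - (\<integral>x. f x \<partial>M)\<bar> \<le> e / 2"
      if "prob_space M" "sets M = sets borel" "AE x in M. x \<in> S" for M
    proof (rule prob_space.integral_dist_le_AE[OF that(1)])
      have "finite_measure M"
        using that(1) by (simp add: prob_space_def)
      then show "integrable M g" "integrable M f"
        using integrable that(2,3) g R(2)[OF f(1)] by blast+
      show "AE x in M. \<bar>g x - f x\<bar> \<le> e / 2"
        using that(3) by eventually_elim (use f(2) in fastforce)
    qed
    show ?thesis
      using close[OF \<mu>] close[OF \<nu>] eq[OF f(1)] by linarith
  qed
  then show "(\<integral>x. g x \<partial>\<mu>) = (\<integral>x. g x \<partial>\<nu>)"
    using field_le_epsilon[of "\<bar>(\<integral>x. g x \<partial>\<mu>) - (\<integral>x. g x \<partial>\<nu>)\<bar>" 0] by simp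
qed (use \<mu> \<nu> in simp_all)

inductive_set exp_poly :: "('a::real_inner \<Rightarrow> real) set" where
  zero: "(\<lambda>_. 0) \<in> exp_poly"
| add_exp: "f \<in> exp_poly \<Longrightarrow> (\<lambda>x. f x + c * exp (x \<bullet> t)) \<in> exp_poly"

lemma exp_poly_const: "(\<lambda>_. c) \<in> exp_poly"
  using exp_poly.add_exp[OF exp_poly.zero, of c 0] by simp

lemma exp_poly_exp: "(\<lambda>x. exp (x \<bullet> t)) \<in> exp_poly"
  using exp_poly.add_exp[OF exp_poly.zero, of 1 t] by simp

lemma exp_poly_add:
  assumes "f \<in> exp_poly" "g \<in> exp_poly"
  shows "(\<lambda>x. f x + g x) \<in> exp_poly"
  using assms(2)
proof induction
  case zero
  then show ?case
    using assms(1) by simp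
next
  case (add_exp g c t)
  then show ?case
    using exp_poly.add_exp[OF add_exp.IH, of c t] by (simp add: add.assoc)
qed

lemma exp_poly_mult_exp:
  assumes "f \<in> exp_poly"
  shows "(\<lambda>x. f x * (c * exp (x \<bullet> t))) \<in> exp_poly"
  using assms
proof induction
  case zero
  then show ?case
    using exp_poly.zero by simp
next
  case (add_exp f d s)
  have "(\<lambda>x. (f x + d * exp (x \<bullet> s)) * (c * exp (x \<bullet> t))) =
        (\<lambda>x. f x * (c * exp (x \<bullet> t)) + (d * c) * exp (x \<bullet> (s + t)))"
    by (simp add: algebra_simps inner_add_right exp_add)
  then show ?case
    using exp_poly.add_exp[OF add_exp.IH] by simp
qed

lemma exp_poly_mult:
  assumes "f \<in> exp_poly" "g \<in> exp_poly"
  shows "(\<lambda>x. f x * g x) \<in> exp_poly"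
  using assms(2)
proof induction
  case zero
  then show ?case
    using exp_poly.zero by simp
next
  case (add_exp g c t)
  then show ?case
    using exp_poly_add[OF add_exp.IH exp_poly_mult_exp[OF assms(1)]] by (simp add: distrib_left)
qed

lemma continuous_on_exp_poly: "f \<in> exp_poly \<Longrightarrow> continuous_on UNIV f"
  by (induction rule: exp_poly.induct) (auto intro!: continuous_intros)

lemma function_ring_on_exp_poly:
  fixes S :: "'a::real_inner set"
  assumes "compact S"
  shows "function_ring_on exp_poly S"
proof
  show "\<exists>f\<in>exp_poly. f x \<noteq> f y" if "x \<noteq> y" for x y :: 'a
  proof
    have "x \<bullet> (x - y) - y \<bullet> (x - y) > 0"
      using that by (simp flip: inner_diff_left)
    then show "exp (x \<bullet> (x - y)) \<noteq> exp (y \<bullet> (x - y))"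
      by auto
  qed (rule exp_poly_exp)
qed (auto simp: assms exp_poly_const exp_poly_add exp_poly_mult
          intro: continuous_on_subset[OF continuous_on_exp_poly])

definition mgf :: "'a::real_inner measure \<Rightarrow> 'a \<Rightarrow> real" where
  "mgf \<mu> t = (\<integral>x. exp (x \<bullet> t) \<partial>\<mu>)"

theorem measure_eqI_mgf:
  fixes \<mu> \<nu> :: "'a::real_inner measure"
  assumes \<mu>: "prob_space \<mu>" "sets \<mu> = sets borel" "AE x in \<mu>. x \<in> S"
    and \<nu>: "prob_space \<nu>" "sets \<nu> = sets borel" "AE x in \<nu>. x \<in> S"
    and "compact S" "\<And>t. mgf \<mu> t = mgf \<nu> t"
  shows "\<mu> = \<nu>"
proof (rule measure_eqI_function_ring[OF function_ring_on_exp_poly[OF \<open>compact S\<close>]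
      continuous_on_exp_poly \<mu> \<nu>])
  have integrable: "integrable M f"
    if "prob_space M" "sets M = sets borel" "AE x in M. x \<in> S" "continuous_on UNIV f" for M and f :: "'a \<Rightarrow> real"
    using that \<open>compact S\<close> by (intro integrable_continuous_AE_compact) (simp_all add: prob_space_def)
  fix f :: "'a \<Rightarrow> real"
  assume "f \<in> exp_poly"
  then show "(\<integral>x. f x \<partial>\<mu>) = (\<integral>x. f x \<partial>\<nu>)"
  proof induction
    case (add_exp f c t)
    have "(\<integral>x. f x + c * exp (x \<bullet> t) \<partial>M) = (\<integral>x. f x \<partial>M) + c * mgf M t"
      if "prob_space M" "sets M = sets borel" "AE x in M. x \<in> S" for M
      using integrable[OF that continuous_on_exp_poly[OF add_exp.hyps]]
        integrable[OF that, of "\<lambda>x. exp (x \<bullet> t)"]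
      by (simp add: mgf_def continuous_intros)
    then show ?case
      using add_exp.IH assms(8) \<mu> \<nu> by simp
  qed simp
qed

lemma integrable_pair_continuous_AE_compact:
  fixes f :: "'a::{second_countable_topology,t2_space} \<times> 'b::{second_countable_topology,t2_space} \<Rightarrow> real"
  assumes \<mu>: "prob_space \<mu>" "sets \<mu> = sets borel" "AE x in \<mu>. x \<in> S"
    and \<nu>: "prob_space \<nu>" "sets \<nu> = sets borel" "AE y in \<nu>. y \<in> T"
    and "compact S" "compact T" "continuous_on UNIV f"
  shows "integrable (\<mu> \<Otimes>\<^sub>M \<nu>) f"
proof -
  interpret \<mu>: prob_space \<mu> by fact
  interpret \<nu>: prob_space \<nu> by fact
  interpret pair_prob_space \<mu> \<nu> by unfold_locales
  have sets_pair: "sets (\<mu> \<Otimes>\<^sub>M \<nu>) = sets borel"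
    unfolding sets_pair_measure_cong[OF \<mu>(2) \<nu>(2)] borel_prod ..
  then have "space (\<mu> \<Otimes>\<^sub>M \<nu>) = UNIV"
    by (metis sets_eq_imp_space_eq space_borel)
  have "finite_measure (\<mu> \<Otimes>\<^sub>M \<nu>)"
    by (intro finite_measure_pair_measure \<mu>.finite_measure_axioms \<nu>.finite_measure_axioms)
  moreover have "AE p in \<mu> \<Otimes>\<^sub>M \<nu>. p \<in> S \<times> T"
  proof (rule AE_pair_measure)
    show "{p \<in> space (\<mu> \<Otimes>\<^sub>M \<nu>). p \<in> S \<times> T} \<in> sets (\<mu> \<Otimes>\<^sub>M \<nu>)"
      using \<open>compact S\<close> \<open>compact T\<close> \<open>space (\<mu> \<Otimes>\<^sub>M \<nu>) = UNIV\<close>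
      by (simp add: sets_pair compact_imp_closed closed_Times borel_closed)
    show "AE x in \<mu>. AE y in \<nu>. (x, y) \<in> S \<times> T"
      using \<mu>(3) by eventually_elim (use \<nu>(3) in \<open>eventually_elim, simp\<close>)
  qed
  ultimately show ?thesis
    using integrable_continuous_AE_compact[OF _ sets_pair compact_Times[OF assms(7,8)] _ assms(9)] by blast
qed

text \<open>Compute \<open>\<integral>\<integral> exp (s * (x \<bullet> y)) d\<mu>(x) d\<nu>(y)\<close> in both orders.\<close>

lemma mgf_eq_by_double_integral:
  fixes \<mu> \<nu> :: "'a::euclidean_space measure"
  assumes \<mu>: "prob_space \<mu>" "sets \<mu> = sets borel" "AE x in \<mu>. x \<in> S"
    and \<nu>: "prob_space \<nu>" "sets \<nu> = sets borel" "AE x in \<nu>. x \<in> S"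
    and "compact S" "y\<^sub>0 \<in> S"
    and \<mu>_const: "\<And>y. y \<in> S \<Longrightarrow> mgf \<mu> (s *\<^sub>R y) = mgf \<mu> (s *\<^sub>R y\<^sub>0)"
    and \<nu>_const: "\<And>y. y \<in> S \<Longrightarrow> mgf \<nu> (s *\<^sub>R y) = mgf \<nu> (s *\<^sub>R y\<^sub>0)"
  shows "mgf \<mu> (s *\<^sub>R y\<^sub>0) = mgf \<nu> (s *\<^sub>R y\<^sub>0)"
proof -
  interpret \<mu>: prob_space \<mu> by fact
  interpret \<nu>: prob_space \<nu> by fact
  interpret pair_prob_space \<mu> \<nu> by unfold_locales
  define k where "k x y = exp (x \<bullet> (s *\<^sub>R y))" for x y :: 'a
  have "continuous_on UNIV (\<lambda>p. k (fst p) (snd p))"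
    unfolding k_def by (intro continuous_intros)
  then have int: "integrable (\<mu> \<Otimes>\<^sub>M \<nu>) (\<lambda>(x, y). k x y)"
    using integrable_pair_continuous_AE_compact[OF \<mu> \<nu> \<open>compact S\<close> \<open>compact S\<close>]
    by (simp add: case_prod_beta')
  have inner_\<mu>: "(\<integral>x. k x y \<partial>\<mu>) = mgf \<mu> (s *\<^sub>R y)" for y
    by (simp add: k_def mgf_def)
  have inner_\<nu>: "(\<integral>y. k x y \<partial>\<nu>) = mgf \<nu> (s *\<^sub>R x)" for x
    by (simp add: k_def mgf_def inner_commute)
  have "AE y in \<nu>. mgf \<mu> (s *\<^sub>R y) = mgf \<mu> (s *\<^sub>R y\<^sub>0)"
    using \<nu>(3) by eventually_elim (rule \<mu>_const)
  then have "(\<integral>y. \<integral>x. k x y \<partial>\<mu> \<partial>\<nu>) = mgf \<mu> (s *\<^sub>R y\<^sub>0)"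
    using integrable_snd[OF int] by (subst integral_cong_AE[where g="\<lambda>_. mgf \<mu> (s *\<^sub>R y\<^sub>0)"])
      (simp_all add: inner_\<mu> borel_measurable_integrable \<nu>.prob_space)
  moreover have "AE x in \<mu>. mgf \<nu> (s *\<^sub>R x) = mgf \<nu> (s *\<^sub>R y\<^sub>0)"
    using \<mu>(3) by eventually_elim (rule \<nu>_const)
  then have "(\<integral>x. \<integral>y. k x y \<partial>\<nu> \<partial>\<mu>) = mgf \<nu> (s *\<^sub>R y\<^sub>0)"
    using integrable_fst[OF int] by (subst integral_cong_AE[where g="\<lambda>_. mgf \<nu> (s *\<^sub>R y\<^sub>0)"])
      (simp_all add: inner_\<nu> borel_measurable_integrable \<mu>.prob_space)
  ultimately show ?thesis
    using Fubini_integral[OF int] by simp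
qed

section \<open>Uniqueness of the invariant measure\<close>

definition center :: "real^'n \<Rightarrow> real^'n" where
  "center x = x - ((x \<bullet> onevec) / real CARD('n)) *\<^sub>R onevec"

lemma inner_center_onevec: "center x \<bullet> onevec = 0"
  by (simp add: center_def inner_diff_left inner_onevec_onevec)

lemma center_eq_self: "x \<bullet> onevec = 0 \<Longrightarrow> center x = x"
  by (simp add: center_def)

lemma inner_center_right: "x \<bullet> onevec = 0 \<Longrightarrow> x \<bullet> center t = x \<bullet> t"
  by (simp add: center_def inner_diff_right inner_commute[of x onevec])

lemma linear_center: "linear center"
  unfolding center_def by (intro linearI) (auto simp: inner_add_left algebra_simps add_divide_distrib)

lemma center_commute:
  fixes Q :: "real^'n \<Rightarrow> real^'n"
  assumes "orthogonal_transformation Q" "Q onevec = onevec"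
  shows "Q (center x) = center (Q x)"
proof -
  have "Q x \<bullet> onevec = x \<bullet> onevec"
    using assms by (metis orthogonal_transformation_def)
  then show ?thesis
    using assms orthogonal_transformation_linear[OF assms(1)]
    by (simp add: center_def linear_diff linear_scale)
qed

lemma mgf_mc_fixed_orthogonal:
  assumes "is_mc_fixed m \<rho> \<mu>" "orthogonal_transformation Q" "Q onevec = onevec"
  shows "mgf \<mu> (Q t) = mgf \<mu> t"
proof -
  have "mgf \<mu> (Q t) = (\<integral>x. exp (x \<bullet> Q t) \<partial>distr \<mu> borel Q)"
    using is_mc_fixedD(5)[OF assms] by (simp add: mgf_def)
  also have "\<dots> = (\<integral>x. exp (Q x \<bullet> Q t) \<partial>\<mu>)"
    using borel_measurable_orthogonal_transformation[OF assms(2)]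
    by (intro integral_distr) (simp_all add: measurable_cong_sets[OF is_mc_fixedD(2)[OF assms(1)] refl])
  finally show ?thesis
    using assms(2) by (simp add: mgf_def orthogonal_transformation_def)
qed

lemma mgf_mc_fixed_center:
  assumes "is_mc_fixed 0 \<rho> \<mu>"
  shows "mgf \<mu> (center t) = mgf \<mu> t"
  unfolding mgf_def
proof (rule integral_cong_AE)
  show "AE x in \<mu>. exp (x \<bullet> center t) = exp (x \<bullet> t)"
    using is_mc_fixedD(4)[OF assms] by eventually_elim (simp add: mc_surface_inner inner_center_right)
qed (simp_all add: measurable_cong_sets[OF is_mc_fixedD(2)[OF assms] refl])

lemma mgf_mc_fixed_eq:
  assumes "is_mc_fixed 0 \<rho> \<mu>" "norm (center t) = norm (center t')"
  shows "mgf \<mu> t = mgf \<mu> t'"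
proof -
  obtain Q where "orthogonal_transformation Q" "Q onevec = onevec" "Q (center t) = center t'"
    using orthogonal_transformation_fixing_exists[OF inner_center_onevec inner_center_onevec assms(2)] .
  then show ?thesis
    using mgf_mc_fixed_orthogonal[OF assms(1)] mgf_mc_fixed_center[OF assms(1)] by metis
qed

lemma is_mc_fixed_zero_unique:
  fixes \<mu> \<nu> :: "(real^'n) measure"
  assumes "\<rho> > 0" "is_mc_fixed 0 \<rho> \<mu>" "is_mc_fixed 0 \<rho> \<nu>"
  shows "\<mu> = \<nu>"
proof (rule measure_eqI_mgf[OF is_mc_fixedD(1,2,4)[OF assms(2)] is_mc_fixedD(1,2,4)[OF assms(3)]])
  show "compact (mc_surface 0 \<rho> :: (real^'n) set)"
    by (rule compact_mc_surface)
  have "mc_surface 0 \<rho> \<noteq> ({} :: (real^'n) set)"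
    using assms(2) by (auto simp: is_mc_fixed_def)
  then obtain y\<^sub>0 :: "real^'n" where y\<^sub>0: "y\<^sub>0 \<in> mc_surface 0 \<rho>"
    by blast
  have norm_surface: "norm y = sqrt (\<rho> * real CARD('n))" if "y \<in> mc_surface 0 \<rho>" for y :: "real^'n"
    using that by (simp add: mc_surface_inner norm_eq_sqrt_inner)
  have center_surface: "center (s *\<^sub>R y) = s *\<^sub>R y" if "y \<in> mc_surface 0 \<rho>" for s y
    using that by (simp add: center_eq_self mc_surface_inner)
  have ray: "mgf M (s *\<^sub>R y) = mgf M (s *\<^sub>R y\<^sub>0)" if "is_mc_fixed 0 \<rho> M" "y \<in> mc_surface 0 \<rho>" for M s y
    using that y\<^sub>0 by (intro mgf_mc_fixed_eq) (simp_all add: center_surface norm_surface)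
  fix t :: "real^'n"
  define s where "s = norm (center t) / norm y\<^sub>0"
  have "norm y\<^sub>0 > 0"
    using assms(1) y\<^sub>0 by (simp add: norm_surface)
  then have "norm (center t) = norm (center (s *\<^sub>R y\<^sub>0))"
    using y\<^sub>0 by (simp add: center_surface s_def)
  then have "mgf M t = mgf M (s *\<^sub>R y\<^sub>0)" if "is_mc_fixed 0 \<rho> M" for M
    using that by (rule mgf_mc_fixed_eq[rotated])
  then show "mgf \<mu> t = mgf \<nu> t"
    using mgf_eq_by_double_integral[OF is_mc_fixedD(1,2,4)[OF assms(2)] is_mc_fixedD(1,2,4)[OF assms(3)]
        compact_mc_surface y\<^sub>0 ray[OF assms(2)] ray[OF assms(3)]] assms(2,3)
    by simp
qed

lemma is_mc_fixed_unique:
  fixes \<mu> \<nu> :: "(real^'n) measure"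
  assumes "\<rho> > 0" "m\<^sup>2 < \<rho>" "is_mc_fixed m \<rho> \<mu>" "is_mc_fixed m \<rho> \<nu>"
  shows "\<mu> = \<nu>"
proof -
  have zero: "0\<^sup>2 < \<rho>"
    using assms(1) by simp
  have round_trip: "distr (distr M borel (surface_rescale \<rho> m 0)) borel (surface_rescale \<rho> 0 m) = M"
    if "is_mc_fixed m \<rho> M" for M :: "(real^'n) measure"
  proof -
    have S: "sets M = sets borel"
      using that by (rule is_mc_fixedD)
    have "surface_rescale \<rho> m 0 \<in> M \<rightarrow>\<^sub>M borel"
      using borel_measurable_surface_rescale by (simp add: measurable_cong_sets[OF S refl])
    then have "distr (distr M borel (surface_rescale \<rho> m 0)) borel (surface_rescale \<rho> 0 m) = distr M borel (\<lambda>x. x)"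
      by (simp add: distr_distr comp_def surface_rescale_inverse[OF assms(2) zero])
    also have "\<dots> = M"
      using \<open>sets M = sets borel\<close> by (intro distr_id2) simp
    finally show ?thesis .
  qed
  have "distr \<mu> borel (surface_rescale \<rho> m 0) = distr \<nu> borel (surface_rescale \<rho> m 0)"
    using assms(1) is_mc_fixed_rescale[OF assms(3,2) zero] is_mc_fixed_rescale[OF assms(4,2) zero]
    by (rule is_mc_fixed_zero_unique)
  then show ?thesis
    using round_trip[OF assms(3)] round_trip[OF assms(4)] by metis
qed

section \<open>Existence of the invariant measure\<close>

lemma emeasure_lborel_orthogonal_vimage:
  fixes Q :: "(real, 'n::{finite,wellorder}) vec \<Rightarrow> (real, 'n) vec"
  assumes Q: "orthogonal_transformation Q" and X: "X \<in> sets borel" "bounded X"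
  shows "emeasure lborel (Q -` X) = emeasure lborel X"
proof -
  have lborel_lebesgue: "emeasure lborel Y = ennreal (measure lebesgue Y)"
    if "Y \<in> sets borel" "Y \<in> lmeasurable" for Y :: "((real, 'n) vec) set"
  proof -
    have "emeasure lborel Y = emeasure lebesgue Y"
      using that(1) by (simp add: emeasure_completion main_part)
    then show ?thesis
      using emeasure_eq_measure2[OF that(2)] by simp
  qed
  have lmeas: "X \<in> lmeasurable"
    using X by (intro bounded_set_imp_lmeasurable) (auto intro: sets_completionI_sets)
  have "Q -` X = inv Q ` X"
    using orthogonal_transformation_bij[OF Q] bij_vimage_eq_inv_image by blast
  moreover have "Q -` X \<in> sets borel"
    using borel_measurable_orthogonal_transformation[OF Q] X(1) by (simp add: measurable_sets_borel)
  ultimately show ?thesis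
    using measurable_orthogonal_image[OF orthogonal_transformation_inv[OF Q] lmeas]
      measure_orthogonal_image[OF orthogonal_transformation_inv[OF Q] lmeas] lmeas X(1)
    by (simp add: lborel_lebesgue)
qed

lemma distr_uniform_measure_lborel_orthogonal:
  fixes Q :: "(real, 'n::{finite,wellorder}) vec \<Rightarrow> (real, 'n) vec"
  assumes Q: "orthogonal_transformation Q" and D: "D \<in> sets borel" "bounded D"
    and invariant: "\<And>x. Q x \<in> D \<longleftrightarrow> x \<in> D"
  shows "distr (uniform_measure lborel D) borel Q = uniform_measure lborel D"
proof (rule measure_eqI)
  fix A
  assume "A \<in> sets (distr (uniform_measure lborel D) borel Q)"
  then have A: "A \<in> sets borel"
    by simp
  note [measurable] = borel_measurable_orthogonal_transformation[OF Q]
  have "D \<inter> Q -` A = Q -` (D \<inter> A)"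
    using invariant by auto
  then have "emeasure lborel (D \<inter> Q -` A) = emeasure lborel (D \<inter> A)"
    using A D by (simp only:) (intro emeasure_lborel_orthogonal_vimage[OF Q]; auto intro: bounded_subset)
  moreover have "Q -` A \<in> sets borel"
    using measurable_sets_borel[OF borel_measurable_orthogonal_transformation[OF Q] A] .
  ultimately show "emeasure (distr (uniform_measure lborel D) borel Q) A = emeasure (uniform_measure lborel D) A"
    using A D by (simp add: emeasure_distr)
qed simp

definition shell :: "(real^'n) set" where
  "shell = {x. norm x < 1 \<and> 1/2 < norm (center x)}"

lemma open_shell: "open shell"
proof -
  have "continuous_on UNIV (center :: real^'n \<Rightarrow> real^'n)"
    using linear_center linear_conv_bounded_linear linear_continuous_on by blast
  then show ?thesis
    unfolding shell_def
    by (intro open_Collect_conj open_Collect_less continuous_intros) (auto intro: continuous_on_compose2)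
qed

lemma shell_borel [measurable]: "shell \<in> sets borel"
  by (simp add: borel_open open_shell)

lemma bounded_shell: "bounded shell"
  unfolding shell_def bounded_iff by (auto intro: less_imp_le)

lemma orthogonal_transformation_shell_iff:
  fixes Q :: "real^'n \<Rightarrow> real^'n"
  assumes "orthogonal_transformation Q" "Q onevec = onevec"
  shows "Q x \<in> shell \<longleftrightarrow> x \<in> shell"
proof -
  have "norm (center (Q x)) = norm (center x)"
    using orthogonal_transformation_norm[OF assms(1)] by (simp flip: center_commute[OF assms])
  then show ?thesis
    by (simp add: shell_def orthogonal_transformation_norm[OF assms(1)])
qed

lemma prob_space_uniform_shell:
  assumes "CARD('n::finite) \<ge> 2"
  shows "prob_space (uniform_measure lborel (shell :: (real^'n) set))"
proof (rule prob_space_uniform_measure)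
  have "\<not> CARD('n) \<le> Suc 0"
    using assms by simp
  then obtain a b :: 'n where "a \<noteq> b"
    by (auto simp: card_le_Suc0_iff_eq)
  define y :: "real^'n" where "y = (3/4) *\<^sub>R sgn (axis a 1 - axis b 1)"
  have "axis a 1 - axis b 1 \<noteq> (0 :: real^'n)"
    using \<open>a \<noteq> b\<close> by (simp add: axis_eq_axis)
  then have "norm y = 3/4"
    by (simp add: y_def norm_sgn)
  moreover have "y \<bullet> onevec = 0"
    by (simp add: y_def sgn_div_norm inner_diff_left inner_axis' onevec_def)
  ultimately have "y \<in> shell"
    by (simp add: shell_def center_eq_self)
  then have "\<not> negligible (shell :: (real^'n) set)"
    using open_not_negligible[OF open_shell] by blast
  then show "emeasure lborel (shell :: (real^'n) set) \<noteq> 0"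
    using open_shell null_sets_completion_iff[of shell lborel]
    by (auto simp: negligible_iff_null_sets null_setsI)
  show "emeasure lborel (shell :: (real^'n) set) \<noteq> \<infinity>"
    using emeasure_bounded_finite[OF bounded_shell] by (simp add: less_top)
qed

definition sphere_projection :: "real \<Rightarrow> real^'n \<Rightarrow> real^'n" where
  "sphere_projection \<rho> x = (sqrt (\<rho> * real CARD('n)) / norm (center x)) *\<^sub>R center x"

lemma borel_measurable_sphere_projection [measurable]:
  "sphere_projection \<rho> \<in> borel_measurable borel"
  using borel_measurable_linear[OF linear_center] unfolding sphere_projection_def by measurable

lemma sphere_projection_mem:
  assumes "\<rho> \<ge> 0" "center x \<noteq> 0"
  shows "sphere_projection \<rho> x \<in> mc_surface 0 \<rho>"
  using assms by (simp add: mc_surface_inner sphere_projection_def inner_center_onevec dot_square_norm)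

lemma sphere_projection_commute:
  fixes Q :: "real^'n \<Rightarrow> real^'n"
  assumes "orthogonal_transformation Q" "Q onevec = onevec"
  shows "Q (sphere_projection \<rho> x) = sphere_projection \<rho> (Q x)"
  using center_commute[OF assms, of x] orthogonal_transformation_norm[OF assms(1), of "center x"]
  by (simp add: sphere_projection_def orthogonal_transformation_scaleR[OF assms(1)])

lemma ex_is_mc_fixed_wellorder:
  assumes "CARD('n::{finite,wellorder}) \<ge> 2" "\<rho> > 0"
  shows "\<exists>\<mu> :: ((real, 'n) vec) measure. is_mc_fixed 0 \<rho> \<mu>"
proof -
  define U :: "((real, 'n) vec) measure" where "U = uniform_measure lborel shell"
  have "is_mc_fixed 0 \<rho> (distr U borel (sphere_projection \<rho>))"
  proof (rule is_mc_fixed_distrI)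
    show "prob_space U" "sets U = sets borel"
      using prob_space_uniform_shell[OF assms(1)] by (simp_all add: U_def)
    have "AE x in U. x \<in> shell"
      unfolding U_def by (intro AE_uniform_measureI) simp_all
    then show "AE x in U. sphere_projection \<rho> x \<in> mc_surface 0 \<rho>"
    proof eventually_elim
      case (elim x)
      then have "1/2 < norm (center x)"
        by (simp add: shell_def)
      then show ?case
        using assms(2) by (intro sphere_projection_mem) auto
    qed
    show "\<exists>Q'. Q' \<in> borel_measurable borel \<and> distr U borel Q' = U \<and>
        (\<forall>x. Q (sphere_projection \<rho> x) = sphere_projection \<rho> (Q' x))"
      if Q: "orthogonal_transformation Q" "Q onevec = onevec" for Q
    proof (intro exI conjI allI)
      show "Q \<in> borel_measurable borel"
        using Q(1) by (rule borel_measurable_orthogonal_transformation)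
      show "distr U borel Q = U"
        unfolding U_def using shell_borel bounded_shell orthogonal_transformation_shell_iff[OF Q]
        by (intro distr_uniform_measure_lborel_orthogonal[OF Q(1)]) simp_all
      show "Q (sphere_projection \<rho> x) = sphere_projection \<rho> (Q x)" for x
        by (rule sphere_projection_commute[OF Q])
    qed
  qed measurable
  then show ?thesis ..
qed

text \<open>The invariance of Lebesgue measure under orthogonal maps, \<open>measure_orthogonal_image\<close>, is
  only available for well-ordered index types; every finite index type is in bijection with this
  well-ordered one.\<close>

typedef ('a::finite) ordered_index = "{..<CARD('a)}"
  morphisms rank Abs_ordered_index
  by (rule exI[of _ 0]) (simp add: finite_UNIV_card_ge_0)

instance ordered_index :: (finite) finite
proof
  have "(UNIV :: 'a ordered_index set) = Abs_ordered_index ` {..<CARD('a)}"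
    by (rule type_definition.Abs_image[OF type_definition_ordered_index, symmetric])
  then show "finite (UNIV :: 'a ordered_index set)"
    by (metis finite_lessThan finite_imageI)
qed

instantiation ordered_index :: (finite) wellorder
begin

definition less_eq_ordered_index :: "'a ordered_index \<Rightarrow> 'a ordered_index \<Rightarrow> bool"
  where "less_eq_ordered_index i j \<longleftrightarrow> rank i \<le> rank j"

definition less_ordered_index :: "'a ordered_index \<Rightarrow> 'a ordered_index \<Rightarrow> bool"
  where "less_ordered_index i j \<longleftrightarrow> rank i < rank j"

instance
proof
  fix P :: "'a ordered_index \<Rightarrow> bool" and a :: "'a ordered_index"
  assume step: "\<And>i. (\<And>j. j < i \<Longrightarrow> P j) \<Longrightarrow> P i"
  have "P i" if "rank i = n" for n i
    using that
  proof (induction n arbitrary: i rule: less_induct)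
    case (less n)
    show ?case
      by (rule step) (use less in \<open>auto simp: less_ordered_index_def\<close>)
  qed
  then show "P a"
    by blast
qed (auto simp: less_eq_ordered_index_def less_ordered_index_def rank_inject[symmetric])

end

lemma card_ordered_index: "CARD('a::finite ordered_index) = CARD('a)"
  using type_definition.card[OF type_definition_ordered_index] by simp

lemma ex_is_mc_fixed:
  assumes "CARD('n::finite) \<ge> 2" "\<rho> > 0" "m\<^sup>2 < \<rho>"
  shows "\<exists>\<mu> :: (real^'n) measure. is_mc_fixed m \<rho> \<mu>"
proof -
  obtain \<mu> :: "(real^'n ordered_index) measure" where \<mu>: "is_mc_fixed 0 \<rho> \<mu>"
    using ex_is_mc_fixed_wellorder[where 'n="'n ordered_index"] assms(1,2) by (auto simp: card_ordered_index)
  obtain g :: "'n \<Rightarrow> 'n ordered_index" where "bij_betw g UNIV UNIV"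
    using finite_same_card_bij[of "UNIV :: 'n set" "UNIV :: 'n ordered_index set"] by (auto simp: card_ordered_index)
  then have "is_mc_fixed 0 \<rho> (distr \<mu> borel (\<lambda>x. \<chi> i. x $ g i) :: (real^'n) measure)"
    using \<mu> by (intro is_mc_fixed_reindex) (simp_all add: bij_betw_def bij_def)
  then show ?thesis
    using is_mc_fixed_rescale[of 0 \<rho> _ m] assms(2,3) by auto
qed

lemma is_mc_fixed_mc_fixed:
  assumes "CARD('n::finite) \<ge> 2" "\<rho> > 0" "m\<^sup>2 < \<rho>"
  shows "is_mc_fixed m \<rho> (mc_fixed m \<rho> :: (real^'n) measure)"
  unfolding mc_fixed_eq_The
  by (rule theI') (use ex_is_mc_fixed[OF assms] is_mc_fixed_unique[OF assms(2,3)] in blast)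

lemma mc_fixed_eq_distr_rescale:
  assumes "CARD('n::finite) \<ge> 2" "\<rho> > 0" "m\<^sup>2 < \<rho>" "m'\<^sup>2 < \<rho>"
  shows "(mc_fixed m' \<rho> :: (real^'n) measure) = distr (mc_fixed m \<rho>) borel (surface_rescale \<rho> m m')"
  using is_mc_fixed_unique[OF assms(2,4) is_mc_fixed_mc_fixed[OF assms(1,2,4)]
      is_mc_fixed_rescale[OF is_mc_fixed_mc_fixed[OF assms(1-3)] assms(3,4)]] .

section \<open>Mixtures, couplings and the Wasserstein distance\<close>

lemma sets_half_mix [simp]: "sets (half_mix \<mu> \<nu>) = sets \<mu>"
  by (simp add: half_mix_def sets_measure_of sets.space_closed sets.sigma_sets_eq)

lemma space_half_mix [simp]: "space (half_mix \<mu> \<nu>) = space \<mu>"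
  by (simp add: half_mix_def space_measure_of_conv)

lemma emeasure_half_mix:
  assumes "sets \<nu> = sets \<mu>" "A \<in> sets \<mu>"
  shows "emeasure (half_mix \<mu> \<nu>) A = 1/2 * emeasure \<mu> A + 1/2 * emeasure \<nu> A"
  unfolding half_mix_def
proof (rule emeasure_measure_of_sigma[OF sets.sigma_algebra_axioms _ _ assms(2)])
  show "positive (sets \<mu>) (\<lambda>A. 1/2 * emeasure \<mu> A + 1/2 * emeasure \<nu> A)"
    by (simp add: positive_def)
  show "countably_additive (sets \<mu>) (\<lambda>A. 1/2 * emeasure \<mu> A + 1/2 * emeasure \<nu> A)"
  proof (rule countably_additiveI)
    fix F :: "nat \<Rightarrow> _"
    assume F: "range F \<subseteq> sets \<mu>" "disjoint_family F"
    then have "(\<Sum>i. emeasure \<mu> (F i)) = emeasure \<mu> (\<Union>i. F i)"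
      "(\<Sum>i. emeasure \<nu> (F i)) = emeasure \<nu> (\<Union>i. F i)"
      using assms(1) by (simp_all add: suminf_emeasure)
    then show "(\<Sum>i. 1/2 * emeasure \<mu> (F i) + 1/2 * emeasure \<nu> (F i)) =
        1/2 * emeasure \<mu> (\<Union>i. F i) + 1/2 * emeasure \<nu> (\<Union>i. F i)"
      by (simp add: suminf_add[symmetric] ennreal_suminf_cmult)
  qed
qed

lemma ennreal_half_add_half [simp]: "1/2 * x + 1/2 * x = (x :: ennreal)"
proof -
  have "1/2 + 1/2 = (1 :: ennreal)"
    by (metis ennreal_divide_numeral ennreal_numeral ennreal_plus field_sum_of_halves ennreal_1
        zero_le_divide_iff zero_le_one zero_le_numeral)
  then show ?thesis
    by (metis distrib_right mult_1)
qed

lemma half_mix_self [simp]: "half_mix \<mu> \<mu> = \<mu>"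
  by (rule measure_eqI) (simp_all add: emeasure_half_mix)

lemma prob_space_half_mix:
  assumes "prob_space \<mu>" "prob_space \<nu>" "sets \<nu> = sets \<mu>"
  shows "prob_space (half_mix \<mu> \<nu>)"
proof (rule prob_spaceI)
  have "space \<nu> = space \<mu>"
    using assms(3) by (rule sets_eq_imp_space_eq)
  then have "emeasure \<mu> (space \<mu>) = 1" "emeasure \<nu> (space \<mu>) = 1"
    using assms(1,2) by (metis prob_space.emeasure_space_1)+
  then show "emeasure (half_mix \<mu> \<nu>) (space (half_mix \<mu> \<nu>)) = 1"
    using assms(3) ennreal_half_add_half[of 1] by (simp add: emeasure_half_mix)
qed

lemma distr_half_mix:
  assumes "sets \<nu> = sets \<mu>" "f \<in> \<mu> \<rightarrow>\<^sub>M N"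
  shows "distr (half_mix \<mu> \<nu>) N f = half_mix (distr \<mu> N f) (distr \<nu> N f)"
proof (rule measure_eqI)
  fix A
  assume "A \<in> sets (distr (half_mix \<mu> \<nu>) N f)"
  then have A: "A \<in> sets N"
    by simp
  have f: "f \<in> \<nu> \<rightarrow>\<^sub>M N" "f \<in> half_mix \<mu> \<nu> \<rightarrow>\<^sub>M N"
    using assms(2) by (simp_all add: measurable_cong_sets[OF assms(1) refl]
        measurable_cong_sets[OF sets_half_mix refl])
  have "space \<nu> = space \<mu>"
    using assms(1) by (rule sets_eq_imp_space_eq)
  then show "emeasure (distr (half_mix \<mu> \<nu>) N f) A = emeasure (half_mix (distr \<mu> N f) (distr \<nu> N f)) A"
    using assms A f measurable_sets[OF assms(2) A] by (simp add: emeasure_distr emeasure_half_mix)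
qed simp

lemma AE_half_mixI:
  assumes "sets \<nu> = sets \<mu>" "{x \<in> space \<mu>. P x} \<in> sets \<mu>"
    and "AE x in \<mu>. P x" "AE x in \<nu>. P x"
  shows "AE x in half_mix \<mu> \<nu>. P x"
proof -
  have N: "{x \<in> space \<mu>. \<not> P x} \<in> sets \<mu>"
    using assms(2) by (rule sets.sets_Collect_neg)
  have "space \<nu> = space \<mu>"
    using assms(1) by (rule sets_eq_imp_space_eq)
  then have "emeasure \<mu> {x \<in> space \<mu>. \<not> P x} = 0" "emeasure \<nu> {x \<in> space \<mu>. \<not> P x} = 0"
    using assms(1,3,4) N by (simp_all add: AE_iff_measurable[OF _ refl])
  then show ?thesis
    using assms(1) N by (simp add: AE_iff_measurable[OF _ refl] emeasure_half_mix)
qed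

lemma borel_measurable_graph:
  fixes T :: "'a::second_countable_topology \<Rightarrow> 'b::second_countable_topology"
  assumes "T \<in> borel_measurable borel"
  shows "(\<lambda>x. (x, T x)) \<in> borel \<rightarrow>\<^sub>M borel"
  using measurable_Pair[OF measurable_ident_sets[OF refl] assms] by (simp add: borel_prod)

lemma couplings_graph:
  fixes T :: "real^'n \<Rightarrow> real^'n"
  assumes "prob_space \<mu>" "sets \<mu> = sets borel" "T \<in> borel_measurable borel"
  shows "distr \<mu> borel (\<lambda>x. (x, T x)) \<in> couplings \<mu> (distr \<mu> borel T)"
proof -
  have graph: "(\<lambda>x. (x, T x)) \<in> \<mu> \<rightarrow>\<^sub>M borel"
    using borel_measurable_graph[OF assms(3)] by (simp add: measurable_cong_sets[OF assms(2) refl])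
  have fst: "fst \<in> borel \<rightarrow>\<^sub>M (borel :: (real^'n) measure)"
    using borel_measurable_continuous_onI[OF continuous_on_fst[OF continuous_on_id]] by simp
  have snd: "snd \<in> borel \<rightarrow>\<^sub>M (borel :: (real^'n) measure)"
    using borel_measurable_continuous_onI[OF continuous_on_snd[OF continuous_on_id]] by simp
  have "distr (distr \<mu> borel (\<lambda>x. (x, T x))) borel fst = distr \<mu> borel (\<lambda>x. x)"
    "distr (distr \<mu> borel (\<lambda>x. (x, T x))) borel snd = distr \<mu> borel T"
    using distr_distr[OF fst graph] distr_distr[OF snd graph] by (simp_all add: comp_def)
  moreover have "distr \<mu> borel (\<lambda>x. x) = \<mu>"
    using assms(2) by (intro distr_id2) simp
  ultimately show ?thesis
    using assms(1) graph by (simp add: couplings_def prob_space.prob_space_distr)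
qed

lemma couplings_half_mix:
  fixes \<gamma>\<^sub>1 \<gamma>\<^sub>2 :: "((real^'n) \<times> (real^'n)) measure"
  assumes "\<gamma>\<^sub>1 \<in> couplings \<mu>\<^sub>1 \<nu>\<^sub>1" "\<gamma>\<^sub>2 \<in> couplings \<mu>\<^sub>2 \<nu>\<^sub>2"
  shows "half_mix \<gamma>\<^sub>1 \<gamma>\<^sub>2 \<in> couplings (half_mix \<mu>\<^sub>1 \<mu>\<^sub>2) (half_mix \<nu>\<^sub>1 \<nu>\<^sub>2)"
proof -
  have \<gamma>: "prob_space \<gamma>\<^sub>1" "prob_space \<gamma>\<^sub>2" "sets \<gamma>\<^sub>1 = sets borel" "sets \<gamma>\<^sub>2 = sets borel"
    and marginals: "distr \<gamma>\<^sub>1 borel fst = \<mu>\<^sub>1" "distr \<gamma>\<^sub>1 borel snd = \<nu>\<^sub>1"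
      "distr \<gamma>\<^sub>2 borel fst = \<mu>\<^sub>2" "distr \<gamma>\<^sub>2 borel snd = \<nu>\<^sub>2"
    using assms by (simp_all add: couplings_def)
  have "fst \<in> \<gamma>\<^sub>1 \<rightarrow>\<^sub>M (borel :: (real^'n) measure)" "snd \<in> \<gamma>\<^sub>1 \<rightarrow>\<^sub>M (borel :: (real^'n) measure)"
    by (simp_all add: measurable_cong_sets[OF \<gamma>(3) refl] borel_measurable_continuous_onI continuous_on_fst
        continuous_on_snd continuous_on_id)
  then show ?thesis
    using \<gamma> by (simp add: couplings_def prob_space_half_mix distr_half_mix marginals)
qed

lemma w2_le_sqrt:
  fixes \<mu> \<nu> :: "(real^'n) measure"
  assumes "\<gamma> \<in> couplings \<mu> \<nu>" "0 \<le> C"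
    and "AE p in \<gamma>. (fst p - snd p) \<bullet> (fst p - snd p) \<le> C * real CARD('n)"
  shows "w2 \<mu> \<nu> \<le> sqrt C"
proof -
  let ?cost = "\<lambda>p :: (real^'n) \<times> (real^'n). (1 / real CARD('n)) * (\<Sum>i\<in>UNIV. \<bar>fst p $ i - snd p $ i\<bar>^2)"
  have "prob_space \<gamma>"
    using assms(1) by (simp add: couplings_def)
  have "AE p in \<gamma>. ?cost p \<le> C"
    using assms(3)
  proof eventually_elim
    case (elim p)
    then show ?case
      using sum_power2_eq_inner[of "fst p - snd p"] by (simp add: field_simps)
  qed
  then have "(\<integral>\<^sup>+ p. ennreal (?cost p) \<partial>\<gamma>) \<le> (\<integral>\<^sup>+ p. ennreal C \<partial>\<gamma>)"
    by (intro nn_integral_mono_AE) (auto intro: ennreal_leI)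
  also have "\<dots> = ennreal C"
    using prob_space.emeasure_space_1[OF \<open>prob_space \<gamma>\<close>] by simp
  finally have "(INF \<gamma>\<in>couplings \<mu> \<nu>. \<integral>\<^sup>+ p. ennreal (?cost p) \<partial>\<gamma>) \<le> ennreal C"
    by (rule INF_lower2[OF assms(1)])
  then have "enn2real (INF \<gamma>\<in>couplings \<mu> \<nu>. \<integral>\<^sup>+ p. ennreal (?cost p) \<partial>\<gamma>) \<le> C"
    using assms(2) enn2real_mono[of _ "ennreal C"] by fastforce
  then show ?thesis
    by (simp add: w2_def)
qed

lemma couplings_mc_fixed_rescale:
  assumes "CARD('n::finite) \<ge> 2" "\<rho> > 0" "m\<^sup>2 < \<rho>" "m'\<^sup>2 < \<rho>"
  defines "\<gamma> \<equiv> distr (mc_fixed m \<rho> :: (real^'n) measure) borel (\<lambda>x. (x, surface_rescale \<rho> m m' x))"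
  shows "\<gamma> \<in> couplings (mc_fixed m \<rho>) (mc_fixed m' \<rho>)"
    and "AE p in \<gamma>. (fst p - snd p) \<bullet> (fst p - snd p) = (rescale_distance \<rho> m m')\<^sup>2 * real CARD('n)"
proof -
  note fixed = is_mc_fixed_mc_fixed[OF assms(1-3)]
  show "\<gamma> \<in> couplings (mc_fixed m \<rho>) (mc_fixed m' \<rho>)"
    unfolding \<gamma>_def mc_fixed_eq_distr_rescale[OF assms(1-4)]
    using is_mc_fixedD(1,2)[OF fixed] by (rule couplings_graph) simp
  have "(\<lambda>x :: real^'n. (x, surface_rescale \<rho> m m' x)) \<in> mc_fixed m \<rho> \<rightarrow>\<^sub>M borel"
    using borel_measurable_graph[OF borel_measurable_surface_rescale]
    by (simp add: measurable_cong_sets[OF is_mc_fixedD(2)[OF fixed] refl])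
  moreover have "{p :: (real^'n) \<times> (real^'n). (fst p - snd p) \<bullet> (fst p - snd p) = c} \<in> sets borel" for c
    by (intro borel_closed closed_Collect_eq continuous_intros)
  ultimately show "AE p in \<gamma>. (fst p - snd p) \<bullet> (fst p - snd p) = (rescale_distance \<rho> m m')\<^sup>2 * real CARD('n)"
    unfolding \<gamma>_def using is_mc_fixedD(4)[OF fixed] surface_rescale_dist[OF assms(3,4)]
    by (subst AE_distr_iff) (auto simp: is_mc_fixedD(3)[OF fixed] elim: AE_mp)
qed

lemma w2_half_mix_mc_fixed_le:
  assumes "CARD('n::finite) \<ge> 2" "\<rho> > 0" "m\<^sup>2 < \<rho>" "m'\<^sup>2 < \<rho>"
  shows "w2 (half_mix (mc_fixed m \<rho>) (mc_fixed (- m) \<rho>) :: (real^'n) measure)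
              (half_mix (mc_fixed m' \<rho>) (mc_fixed (- m') \<rho>))
           \<le> rescale_distance \<rho> m m'"
proof -
  have "(- m)\<^sup>2 < \<rho>" "(- m')\<^sup>2 < \<rho>"
    using assms(3,4) by simp_all
  note plus = couplings_mc_fixed_rescale[OF assms]
    and minus = couplings_mc_fixed_rescale[OF assms(1,2) this]
  let ?\<gamma> = "\<lambda>a a'. distr (mc_fixed a \<rho> :: (real^'n) measure) borel (\<lambda>x. (x, surface_rescale \<rho> a a' x))"
  have "{p :: (real^'n) \<times> (real^'n). (fst p - snd p) \<bullet> (fst p - snd p) \<le> (rescale_distance \<rho> m m')\<^sup>2 * real CARD('n)}
      \<in> sets borel"
    by (intro borel_closed closed_Collect_le continuous_intros)
  moreover have "AE p in ?\<gamma> m m'. (fst p - snd p) \<bullet> (fst p - snd p) \<le> (rescale_distance \<rho> m m')\<^sup>2 * real CARD('n)"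
    using plus(2) by eventually_elim simp
  moreover have "AE p in ?\<gamma> (- m) (- m').
      (fst p - snd p) \<bullet> (fst p - snd p) \<le> (rescale_distance \<rho> m m')\<^sup>2 * real CARD('n)"
    using minus(2) by eventually_elim (simp add: rescale_distance_uminus)
  ultimately have "AE p in half_mix (?\<gamma> m m') (?\<gamma> (- m) (- m')).
      (fst p - snd p) \<bullet> (fst p - snd p) \<le> (rescale_distance \<rho> m m')\<^sup>2 * real CARD('n)"
    by (intro AE_half_mixI) simp_all
  with couplings_half_mix[OF plus(1) minus(1)] have "w2 (half_mix (mc_fixed m \<rho>) (mc_fixed (- m) \<rho>) :: (real^'n) measure)
      (half_mix (mc_fixed m' \<rho>) (mc_fixed (- m') \<rho>)) \<le> sqrt ((rescale_distance \<rho> m m')\<^sup>2)"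
    by (intro w2_le_sqrt) simp_all
  then show ?thesis
    by (simp add: rescale_distance_def)
qed

section \<open>From magnetizations to energies\<close>

text \<open>With \<open>r = sqrt (\<rho> - m\<^sup>2)\<close> and \<open>r' = sqrt (\<rho> - m'\<^sup>2)\<close>, both \<open>m - m'\<close> and \<open>r' - r\<close> equal
  \<open>m\<^sup>2 - m'\<^sup>2\<close> divided by a sum of two non-negative roots; dropping the primed root in each
  denominator and using \<open>m\<^sup>2 + r\<^sup>2 = \<rho>\<close> gives the bound.\<close>

lemma rescale_distance_le:
  fixes m m' \<rho> :: real
  assumes "0 < m" "0 \<le> m'" "m\<^sup>2 < \<rho>" "m'\<^sup>2 < \<rho>"
  shows "rescale_distance \<rho> m m' \<le> \<bar>m\<^sup>2 - m'\<^sup>2\<bar> / (m * sqrt (1 - m\<^sup>2 / \<rho>))"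
proof -
  define r where "r = sqrt (\<rho> - m\<^sup>2)"
  define r' where "r' = sqrt (\<rho> - m'\<^sup>2)"
  define d where "d = m\<^sup>2 - m'\<^sup>2"
  have "\<rho> > 0" "r > 0" "r' \<ge> 0"
    using assms by (auto simp: r_def r'_def intro: order.strict_trans1[OF zero_le_power2])
  have r_sq: "r\<^sup>2 = \<rho> - m\<^sup>2" "r'\<^sup>2 = \<rho> - m'\<^sup>2"
    using assms(3,4) by (simp_all add: r_def r'_def)
  have "(m - m') * (m + m') = d"
    by (simp add: d_def power2_eq_square algebra_simps)
  then have "m - m' = d / (m + m')"
    using assms(1,2) by (simp add: field_simps)
  moreover have "(r - r') * (r + r') = - d"
    using r_sq by (simp add: d_def power2_eq_square algebra_simps)
  then have "r - r' = - d / (r + r')"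
    using \<open>r > 0\<close> \<open>r' \<ge> 0\<close> by (simp add: field_simps)
  ultimately have "(m - m')\<^sup>2 + (r - r')\<^sup>2 = d\<^sup>2 / (m + m')\<^sup>2 + d\<^sup>2 / (r + r')\<^sup>2"
    by (simp add: power_divide)
  moreover have "d\<^sup>2 / (m + m')\<^sup>2 \<le> d\<^sup>2 / m\<^sup>2" "d\<^sup>2 / (r + r')\<^sup>2 \<le> d\<^sup>2 / r\<^sup>2"
    using assms(1,2) \<open>r > 0\<close> \<open>r' \<ge> 0\<close> by (auto intro!: divide_left_mono power_mono)
  moreover have "d\<^sup>2 / m\<^sup>2 + d\<^sup>2 / r\<^sup>2 = (\<bar>d\<bar> / (m * sqrt (1 - m\<^sup>2 / \<rho>)))\<^sup>2"
  proof -
    have "1 - m\<^sup>2 / \<rho> = r\<^sup>2 / \<rho>"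
      using \<open>\<rho> > 0\<close> r_sq by (simp add: field_simps)
    then have "\<bar>d\<bar> / (m * sqrt (1 - m\<^sup>2 / \<rho>)) = \<bar>d\<bar> * sqrt \<rho> / (m * r)"
      using \<open>\<rho> > 0\<close> \<open>r > 0\<close> by (simp add: real_sqrt_divide field_simps)
    moreover have "d\<^sup>2 / m\<^sup>2 + d\<^sup>2 / r\<^sup>2 = d\<^sup>2 * (m\<^sup>2 + r\<^sup>2) / (m\<^sup>2 * r\<^sup>2)"
      using assms(1) \<open>r > 0\<close> by (simp add: field_simps)
    ultimately show ?thesis
      using \<open>\<rho> > 0\<close> r_sq by (simp add: power_divide power_mult_distrib)
  qed
  ultimately have "(m - m')\<^sup>2 + (r - r')\<^sup>2 \<le> (\<bar>d\<bar> / (m * sqrt (1 - m\<^sup>2 / \<rho>)))\<^sup>2"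
    by linarith
  moreover have "0 \<le> \<bar>d\<bar> / (m * sqrt (1 - m\<^sup>2 / \<rho>))"
    using assms(1,3) \<open>\<rho> > 0\<close> by simp
  ultimately show ?thesis
    unfolding rescale_distance_def r_def r'_def d_def by (simp add: real_le_lsqrt)
qed

lemma rescale_distance_from_zero_le:
  fixes m' \<rho> :: real
  assumes "0 \<le> m'" "m'\<^sup>2 < \<rho>"
  shows "rescale_distance \<rho> 0 m' \<le> sqrt 2 * m'"
proof -
  define s where "s = sqrt \<rho>"
  define r' where "r' = sqrt (\<rho> - m'\<^sup>2)"
  have "0 \<le> \<rho> - m'\<^sup>2" "0 \<le> \<rho>"
    using assms(2) zero_le_power2[of m'] by linarith+
  then have "0 \<le> r'" "r' \<le> s" "s\<^sup>2 - r'\<^sup>2 = m'\<^sup>2"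
    by (simp_all add: s_def r'_def)
  then have "(s - r')\<^sup>2 \<le> (s - r') * (s + r')"
    by (simp add: power2_eq_square mult_left_mono)
  also have "\<dots> = m'\<^sup>2"
    using \<open>s\<^sup>2 - r'\<^sup>2 = m'\<^sup>2\<close> by (simp add: power2_eq_square algebra_simps)
  finally have "(s - r')\<^sup>2 \<le> m'\<^sup>2" .
  then have "sqrt ((0 - m')\<^sup>2 + (s - r')\<^sup>2) \<le> sqrt (2 * m'\<^sup>2)"
    by simp
  then show ?thesis
    using assms(1) by (simp add: rescale_distance_def s_def r'_def real_sqrt_mult)
qed

definition magnetization :: "real \<Rightarrow> real \<Rightarrow> real" where
  "magnetization J \<epsilon> = sqrt (-2 * \<epsilon> / J)"

lemma mc_energy_eq_half_mix:
  "mc_energy J \<epsilon> \<rho> = half_mix (mc_fixed (magnetization J \<epsilon>) \<rho>) (mc_fixed (- magnetization J \<epsilon>) \<rho>)"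
  by (simp add: mc_energy_def magnetization_def)

lemma magnetization:
  assumes "J > 0" "- (\<rho> * J / 2) < \<epsilon>" "\<epsilon> \<le> 0"
  shows "0 \<le> magnetization J \<epsilon>" "(magnetization J \<epsilon>)\<^sup>2 = -2 * \<epsilon> / J" "(magnetization J \<epsilon>)\<^sup>2 < \<rho>"
proof -
  show "0 \<le> magnetization J \<epsilon>" and sq: "(magnetization J \<epsilon>)\<^sup>2 = -2 * \<epsilon> / J"
    using assms(1,3) by (simp_all add: magnetization_def divide_nonpos_pos)
  show "(magnetization J \<epsilon>)\<^sup>2 < \<rho>"
    using assms(1,2) by (simp add: sq field_simps)
qed

lemma rescale_distance_energy_le:
  assumes "J > 0" "- (\<rho> * J / 2) < \<epsilon>" "\<epsilon> < 0" "- (\<rho> * J / 2) < \<epsilon>'" "\<epsilon>' \<le> 0"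
  shows "rescale_distance \<rho> (magnetization J \<epsilon>) (magnetization J \<epsilon>')
           \<le> (2 / J) * (1 / (sqrt (- (2 * \<epsilon>) / J) * sqrt (1 - (- (2 * \<epsilon>) / (J * \<rho>))))) * \<bar>\<epsilon> - \<epsilon>'\<bar>"
proof -
  let ?m = "magnetization J \<epsilon>" and ?m' = "magnetization J \<epsilon>'"
  note m = magnetization[OF assms(1,2) less_imp_le[OF assms(3)]] and m' = magnetization[OF assms(1,4,5)]
  have "?m > 0"
    using assms(1,3) by (simp add: magnetization_def divide_neg_pos)
  have "\<epsilon> - \<epsilon>' = - (J / 2) * (?m\<^sup>2 - ?m'\<^sup>2)"
    using assms(1) by (simp add: m(2) m'(2) field_simps)
  then have "2 / J * \<bar>\<epsilon> - \<epsilon>'\<bar> = \<bar>?m\<^sup>2 - ?m'\<^sup>2\<bar>"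
    using assms(1) by (simp add: abs_mult)
  moreover have "- (2 * \<epsilon>) / (J * \<rho>) = ?m\<^sup>2 / \<rho>"
    using assms(1) by (simp add: m(2) field_simps)
  moreover have "sqrt (- (2 * \<epsilon>) / J) = ?m"
    by (simp add: magnetization_def)
  ultimately have "(2 / J) * (1 / (sqrt (- (2 * \<epsilon>) / J) * sqrt (1 - (- (2 * \<epsilon>) / (J * \<rho>))))) * \<bar>\<epsilon> - \<epsilon>'\<bar>
      = \<bar>?m\<^sup>2 - ?m'\<^sup>2\<bar> / (?m * sqrt (1 - ?m\<^sup>2 / \<rho>))"
    by (metis (no_types, lifting) divide_divide_eq_left' mult.commute times_divide_eq_left mult_1)
  then show ?thesis
    using rescale_distance_le[OF \<open>?m > 0\<close> m'(1) m(3) m'(3)] by simp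
qed

lemma rescale_distance_energy_zero_le:
  assumes "J > 0" "- (\<rho> * J / 2) < \<epsilon>'" "\<epsilon>' \<le> 0"
  shows "rescale_distance \<rho> (magnetization J 0) (magnetization J \<epsilon>') \<le> (2 / sqrt J) * sqrt \<bar>\<epsilon>'\<bar>"
proof -
  note m' = magnetization[OF assms]
  have "rescale_distance \<rho> 0 (magnetization J \<epsilon>') \<le> sqrt 2 * magnetization J \<epsilon>'"
    by (rule rescale_distance_from_zero_le[OF m'(1,3)])
  also have "\<dots> = sqrt (2 * (magnetization J \<epsilon>')\<^sup>2)"
    using m'(1) by (simp add: real_sqrt_mult)
  also have "2 * (magnetization J \<epsilon>')\<^sup>2 = 4 * \<bar>\<epsilon>'\<bar> / J"
    using assms(3) by (simp add: m'(2))
  also have "sqrt (4 * \<bar>\<epsilon>'\<bar> / J) = (2 / sqrt J) * sqrt \<bar>\<epsilon>'\<bar>"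
    by (simp add: real_sqrt_divide real_sqrt_mult)
  finally show ?thesis
    by (simp add: magnetization_def)
qed

theorem theorem4p11:
  fixes J \<rho> \<epsilon> \<epsilon>' :: real
  assumes "CARD('n::finite) \<ge> 2"
    and "J > 0" and "\<rho> > 0"
    and "- (\<rho> * J / 2) < \<epsilon>" and "\<epsilon> \<le> 0"
    and "- (\<rho> * J / 2) < \<epsilon>'" and "\<epsilon>' \<le> 0"
  shows "(\<epsilon> \<noteq> 0 \<longrightarrow>
           w2 (mc_energy J \<epsilon> \<rho> :: (real ^ 'n) measure) (mc_energy J \<epsilon>' \<rho>)
             \<le> (2 / J) * (1 / (sqrt (- (2 * \<epsilon>) / J) * sqrt (1 - (- (2 * \<epsilon>) / (J * \<rho>)))))
                 * \<bar>\<epsilon> - \<epsilon>'\<bar>)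
       \<and> (\<epsilon> = 0 \<longrightarrow>
           w2 (mc_energy J 0 \<rho> :: (real ^ 'n) measure) (mc_energy J \<epsilon>' \<rho>)
             \<le> (2 / sqrt J) * sqrt \<bar>\<epsilon>'\<bar>)"
proof -
  have w2_le: "w2 (mc_energy J e \<rho> :: (real ^ 'n) measure) (mc_energy J \<epsilon>' \<rho>)
      \<le> rescale_distance \<rho> (magnetization J e) (magnetization J \<epsilon>')"
    if "- (\<rho> * J / 2) < e" "e \<le> 0" for e
    using w2_half_mix_mc_fixed_le[OF assms(1,3) magnetization(3)[OF assms(2) that]
        magnetization(3)[OF assms(2,6,7)]]
    by (simp add: mc_energy_eq_half_mix)
  show ?thesis
  proof (intro conjI impI)
    assume "\<epsilon> \<noteq> 0"
    with assms(5) have "\<epsilon> < 0"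
      by simp
    show "w2 (mc_energy J \<epsilon> \<rho> :: (real ^ 'n) measure) (mc_energy J \<epsilon>' \<rho>)
        \<le> (2 / J) * (1 / (sqrt (- (2 * \<epsilon>) / J) * sqrt (1 - (- (2 * \<epsilon>) / (J * \<rho>))))) * \<bar>\<epsilon> - \<epsilon>'\<bar>"
      using w2_le[OF assms(4,5)] rescale_distance_energy_le[OF assms(2,4) \<open>\<epsilon> < 0\<close> assms(6,7)]
      by (rule order_trans)
  next
    have "- (\<rho> * J / 2) < 0"
      using assms(2,3) by simp
    then show "w2 (mc_energy J 0 \<rho> :: (real ^ 'n) measure) (mc_energy J \<epsilon>' \<rho>) \<le> (2 / sqrt J) * sqrt \<bar>\<epsilon>'\<bar>"
      using w2_le[of 0] rescale_distance_energy_zero_le[OF assms(2,6,7)] by simp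
  qed
qed

end
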